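(* Let $\mathcal{K}$ be a commutative ring, $\mathcal{A}$ a (possibly noncommutative) $\mathcal{K}$-ring and $P,Q$ $\mathcal{A}$-bimodules. For each $r\ge0$, the set $\mathcal{I}_r\subset\mathrm{Hom}_{\mathcal{K}}(P,Q)$ of left $r$-order $Q$-valued differential operators on $P$ (defined in the context) is stable under all four operations $\Phi\mapsto a\Phi$, $\Phi\mapsto\Phi\bullet a$, $\Phi\mapsto\Phi a$, $\Phi\mapsto a\bullet\Phi$ ($a\in\mathcal{A}$), where $(a\Phi)(p)=a\Phi(p)$, $(\Phi\bullet a)(p)=\Phi(ap)$, $(\Phi a)(p)=\Phi(p)a$, $(a\bullet\Phi)(p)=\Phi(pa)$; that is, $\mathcal{I}_r$ carries both the left and the right $\mathcal{A}$–$\mathcal{A}^\bullet$ module structures.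
   Context: A $\mathcal{K}$-ring is a unital associative $\mathcal{K}$-algebra with $1\neq0$; an $\mathcal{A}$-bimodule is a two-sided $\mathcal{A}$-module central over the center of $\mathcal{A}$. $\mathrm{Hom}_{\mathcal{K}}(P,Q)$ is an $\mathcal{A}$-bimodule via $a\Phi$ (left) and $\Phi\bullet a$ (right) as in the claim; put $\delta_a\Phi:=a\Phi-\Phi\bullet a$. For such a bimodule $M$ its center is $\{x\in M: ax=x\bullet a\ \forall a\}$. Define $\mathcal{Z}_0$ = center of $\mathrm{Hom}_{\mathcal{K}}(P,Q)$, $\mathcal{I}_0$ = sub-bimodule (for $a\Phi$, $\Phi\bullet a$) generated by $\mathcal{Z}_0$; inductively for $r\ge1$, $\mathcal{Z}_r$ = center of $\mathrm{Hom}_{\mathcal{K}}(P,Q)/\mathcal{I}_{r-1}$, $\overline{\mathcal{Z}}_r$ = sub-bimodule generated by $\mathcal{Z}_r$, and $\mathcal{I}_r$ the sub-bimodule with $\mathcal{I}_r/\mathcal{I}_{r-1}=\overline{\mathcal{Z}}_r$. Elements of $\mathcal{I}_r$ are the left $r$-order $Q$-valued differential operators on $P$ (Lunts–Rosenberg). *)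

theory Defs
  imports Main
begin

definition ring_center :: "'a::ring_1 set" where
  "ring_center = {z. \<forall>a. z * a = a * z}"

definition K_ring :: "('k::comm_ring_1 \<Rightarrow> 'a::ring_1) \<Rightarrow> bool" where
  "K_ring iota \<longleftrightarrow>
     (1::'a) \<noteq> 0 \<and> iota 1 = 1 \<and>
     (\<forall>x y. iota (x + y) = iota x + iota y) \<and>
     (\<forall>x y. iota (x * y) = iota x * iota y) \<and>
     (\<forall>x. iota x \<in> ring_center)"

definition bimodule :: "('a::ring_1 \<Rightarrow> 'p::ab_group_add \<Rightarrow> 'p) \<Rightarrow> ('p \<Rightarrow> 'a \<Rightarrow> 'p) \<Rightarrow> bool" where
  "bimodule lm rm \<longleftrightarrow>
     (\<forall>a p q. lm a (p + q) = lm a p + lm a q) \<and>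
     (\<forall>a b p. lm (a + b) p = lm a p + lm b p) \<and>
     (\<forall>a b p. lm (a * b) p = lm a (lm b p)) \<and>
     (\<forall>p. lm 1 p = p) \<and>
     (\<forall>a p q. rm (p + q) a = rm p a + rm q a) \<and>
     (\<forall>a b p. rm p (a + b) = rm p a + rm p b) \<and>
     (\<forall>a b p. rm p (a * b) = rm (rm p a) b) \<and>
     (\<forall>p. rm p 1 = p) \<and>
     (\<forall>a b p. lm a (rm p b) = rm (lm a p) b) \<and>
     (\<forall>z\<in>ring_center. \<forall>p. lm z p = rm p z)"

definition HomK :: "('k::comm_ring_1 \<Rightarrow> 'a::ring_1) \<Rightarrow> ('a \<Rightarrow> 'p::ab_group_add \<Rightarrow> 'p)
    \<Rightarrow> ('a \<Rightarrow> 'q::ab_group_add \<Rightarrow> 'q) \<Rightarrow> ('p \<Rightarrow> 'q) set" where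
  "HomK iota lmP lmQ = {\<Phi>. (\<forall>x y. \<Phi> (x + y) = \<Phi> x + \<Phi> y) \<and>
                            (\<forall>k x. \<Phi> (lmP (iota k) x) = lmQ (iota k) (\<Phi> x))}"

definition hom_lmul :: "('a \<Rightarrow> 'q \<Rightarrow> 'q) \<Rightarrow> 'a \<Rightarrow> ('p \<Rightarrow> 'q) \<Rightarrow> ('p \<Rightarrow> 'q)" where
  "hom_lmul lmQ a \<Phi> = (\<lambda>p. lmQ a (\<Phi> p))"

definition hom_bullet :: "('a \<Rightarrow> 'p \<Rightarrow> 'p) \<Rightarrow> ('p \<Rightarrow> 'q) \<Rightarrow> 'a \<Rightarrow> ('p \<Rightarrow> 'q)" where
  "hom_bullet lmP \<Phi> a = (\<lambda>p. \<Phi> (lmP a p))"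

definition hom_delta :: "('a \<Rightarrow> 'p \<Rightarrow> 'p) \<Rightarrow> ('a \<Rightarrow> 'q::ab_group_add \<Rightarrow> 'q) \<Rightarrow> 'a
    \<Rightarrow> ('p \<Rightarrow> 'q) \<Rightarrow> ('p \<Rightarrow> 'q)" where
  "hom_delta lmP lmQ a \<Phi> = (\<lambda>p. hom_lmul lmQ a \<Phi> p - hom_bullet lmP \<Phi> a p)"

definition sub_bimodule :: "('k::comm_ring_1 \<Rightarrow> 'a::ring_1) \<Rightarrow> ('a \<Rightarrow> 'p::ab_group_add \<Rightarrow> 'p)
    \<Rightarrow> ('a \<Rightarrow> 'q::ab_group_add \<Rightarrow> 'q) \<Rightarrow> ('p \<Rightarrow> 'q) set \<Rightarrow> bool" where
  "sub_bimodule iota lmP lmQ S \<longleftrightarrow>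
     S \<subseteq> HomK iota lmP lmQ \<and> (\<lambda>_. 0) \<in> S \<and>
     (\<forall>\<Phi>\<in>S. \<forall>\<Psi>\<in>S. (\<lambda>p. \<Phi> p + \<Psi> p) \<in> S) \<and>
     (\<forall>\<Phi>\<in>S. (\<lambda>p. - \<Phi> p) \<in> S) \<and>
     (\<forall>\<Phi>\<in>S. \<forall>a. hom_lmul lmQ a \<Phi> \<in> S) \<and>
     (\<forall>\<Phi>\<in>S. \<forall>a. hom_bullet lmP \<Phi> a \<in> S)"

definition gen_sub_bimodule :: "('k::comm_ring_1 \<Rightarrow> 'a::ring_1) \<Rightarrow> ('a \<Rightarrow> 'p::ab_group_add \<Rightarrow> 'p)
    \<Rightarrow> ('a \<Rightarrow> 'q::ab_group_add \<Rightarrow> 'q) \<Rightarrow> ('p \<Rightarrow> 'q) set \<Rightarrow> ('p \<Rightarrow> 'q) set" where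
  "gen_sub_bimodule iota lmP lmQ S = \<Inter>{T. sub_bimodule iota lmP lmQ T \<and> S \<subseteq> T}"

text \<open>I_r: left r-order Q-valued differential operators on P.
  I_0 is generated by the center Z_0 of Hom_K(P,Q); I_(r+1) is the preimage of the
  sub-bimodule of Hom_K(P,Q)/I_r generated by its center, i.e. the sub-bimodule
  generated by I_r together with all \<Phi> with \<delta>_a \<Phi> \<in> I_r for all a.\<close>
primrec diff_ops :: "('k::comm_ring_1 \<Rightarrow> 'a::ring_1) \<Rightarrow> ('a \<Rightarrow> 'p::ab_group_add \<Rightarrow> 'p)
    \<Rightarrow> ('a \<Rightarrow> 'q::ab_group_add \<Rightarrow> 'q) \<Rightarrow> nat \<Rightarrow> ('p \<Rightarrow> 'q) set" where
  "diff_ops iota lmP lmQ 0 =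
     gen_sub_bimodule iota lmP lmQ
       {\<Phi> \<in> HomK iota lmP lmQ. \<forall>a. hom_delta lmP lmQ a \<Phi> = (\<lambda>_. 0)}"
| "diff_ops iota lmP lmQ (Suc r) =
     gen_sub_bimodule iota lmP lmQ
       (diff_ops iota lmP lmQ r \<union>
        {\<Phi> \<in> HomK iota lmP lmQ. \<forall>a. hom_delta lmP lmQ a \<Phi> \<in> diff_ops iota lmP lmQ r})"

end

theory Submission
  imports Defs HOL.Modules "HOL-Library.Function_Algebras"
begin

(* The left operations a\<Phi> and \<Phi>\<bullet>a preserve I_r because I_r is a sub-bimodule.
   The right operations \<Phi>a and a\<bullet>\<Phi> commute with the left actions of A on P and Q, so
   they are additive endomorphisms F of the bimodule of all maps P \<rightarrow> Q which preserve
   Hom_K(P,Q); in particular F(\<delta>_a \<Phi>) = \<delta>_a (F \<Phi>). Such an F maps the generators of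
   I_r (the elements \<Phi> with all \<delta>_a \<Phi> in I_(r-1), resp. zero) to generators, and the
   preimage under F of a sub-bimodule is again a sub-bimodule, so by induction on r
   the map F preserves every I_r. *)

lemma bimodule_additive_left: "bimodule lm rm \<Longrightarrow> additive (lm a)"
  by (rule additive.intro) (simp add: bimodule_def)

lemma bimodule_additive_right: "bimodule lm rm \<Longrightarrow> additive (\<lambda>p. rm p a)"
  by (rule additive.intro) (simp add: bimodule_def)

lemma bimodule_left_right_commute: "bimodule lm rm \<Longrightarrow> lm a (rm p b) = rm (lm a p) b"
  by (simp add: bimodule_def)

lemma bimodule_left_commute_central:
  assumes "bimodule lm rm" and "z \<in> ring_center"
  shows "lm a (lm z x) = lm z (lm a x)"
proof -
  have "lm a (lm z x) = lm (a * z) x" using assms(1) by (simp add: bimodule_def)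
  also have "\<dots> = lm (z * a) x" using assms(2) by (simp add: ring_center_def)
  also have "\<dots> = lm z (lm a x)" using assms(1) by (simp add: bimodule_def)
  finally show ?thesis .
qed

lemma K_ring_central: "K_ring iota \<Longrightarrow> iota k \<in> ring_center"
  by (simp add: K_ring_def)

lemma HomK_sub_bimodule:
  assumes K: "K_ring iota" and P: "bimodule lmP rmP" and Q: "bimodule lmQ rmQ"
  shows "sub_bimodule iota lmP lmQ (HomK iota lmP lmQ)"
proof -
  note Q_add = additive.add[OF bimodule_additive_left[OF Q]]
  note Q_zero = additive.zero[OF bimodule_additive_left[OF Q]]
  note Q_minus = additive.minus[OF bimodule_additive_left[OF Q]]
  note P_add = additive.add[OF bimodule_additive_left[OF P]]
  note P_commute = bimodule_left_commute_central[OF P K_ring_central[OF K]]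
  note Q_commute = bimodule_left_commute_central[OF Q K_ring_central[OF K]]
  have "(\<lambda>p. \<Phi> p + \<Psi> p) \<in> HomK iota lmP lmQ"
    if "\<Phi> \<in> HomK iota lmP lmQ" "\<Psi> \<in> HomK iota lmP lmQ" for \<Phi> \<Psi>
    using that by (simp add: HomK_def Q_add add_ac)
  moreover have "hom_lmul lmQ a \<Phi> \<in> HomK iota lmP lmQ"
    and "hom_bullet lmP \<Phi> a \<in> HomK iota lmP lmQ"
    if "\<Phi> \<in> HomK iota lmP lmQ" for \<Phi> a
    using that
    by (simp_all add: HomK_def hom_lmul_def hom_bullet_def Q_add P_add P_commute Q_commute)
  ultimately show ?thesis
    unfolding sub_bimodule_def by (auto simp: HomK_def Q_zero Q_minus)
qed

lemma gen_sub_bimodule_superset: "S \<subseteq> gen_sub_bimodule iota lmP lmQ S"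
  unfolding gen_sub_bimodule_def by blast

lemma gen_sub_bimodule_least:
  "sub_bimodule iota lmP lmQ T \<Longrightarrow> S \<subseteq> T \<Longrightarrow> gen_sub_bimodule iota lmP lmQ S \<subseteq> T"
  unfolding gen_sub_bimodule_def by blast

lemma sub_bimodule_gen_sub_bimodule:
  assumes "sub_bimodule iota lmP lmQ (HomK iota lmP lmQ)" and "S \<subseteq> HomK iota lmP lmQ"
  shows "sub_bimodule iota lmP lmQ (gen_sub_bimodule iota lmP lmQ S)"
proof -
  have "gen_sub_bimodule iota lmP lmQ S \<subseteq> HomK iota lmP lmQ"
    using gen_sub_bimodule_least[OF assms] .
  then show ?thesis unfolding sub_bimodule_def gen_sub_bimodule_def by blast
qed

lemma sub_bimodule_diff_ops:
  assumes "K_ring iota" and "bimodule lmP rmP" and "bimodule lmQ rmQ"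
  shows "sub_bimodule iota lmP lmQ (diff_ops iota lmP lmQ r)"
proof (induction r)
  case 0
  show ?case
    unfolding diff_ops.simps
    by (rule sub_bimodule_gen_sub_bimodule[OF HomK_sub_bimodule[OF assms]]) blast
next
  case (Suc r)
  then have "diff_ops iota lmP lmQ r \<subseteq> HomK iota lmP lmQ"
    by (simp add: sub_bimodule_def)
  then show ?case
    unfolding diff_ops.simps
    by (intro sub_bimodule_gen_sub_bimodule[OF HomK_sub_bimodule[OF assms]]) blast
qed

definition hom_endo :: "('a \<Rightarrow> 'p::ab_group_add \<Rightarrow> 'p) \<Rightarrow> ('a \<Rightarrow> 'q::ab_group_add \<Rightarrow> 'q)
    \<Rightarrow> (('p \<Rightarrow> 'q) \<Rightarrow> ('p \<Rightarrow> 'q)) \<Rightarrow> bool" where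
  "hom_endo lmP lmQ F \<longleftrightarrow>
     additive F \<and>
     (\<forall>a \<Phi>. F (hom_lmul lmQ a \<Phi>) = hom_lmul lmQ a (F \<Phi>)) \<and>
     (\<forall>a \<Phi>. F (hom_bullet lmP \<Phi> a) = hom_bullet lmP (F \<Phi>) a)"

lemma hom_endo_zero: "hom_endo lmP lmQ F \<Longrightarrow> F (\<lambda>_. 0) = (\<lambda>_. 0)"
  using additive.zero[of F] unfolding hom_endo_def zero_fun_def by blast

lemma hom_endo_add: "hom_endo lmP lmQ F \<Longrightarrow> F (\<lambda>p. \<Phi> p + \<Psi> p) = (\<lambda>p. F \<Phi> p + F \<Psi> p)"
  using additive.add[of F \<Phi> \<Psi>] unfolding hom_endo_def plus_fun_def by blast

lemma hom_endo_minus: "hom_endo lmP lmQ F \<Longrightarrow> F (\<lambda>p. - \<Phi> p) = (\<lambda>p. - F \<Phi> p)"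
  using additive.minus[of F \<Phi>] unfolding hom_endo_def fun_Compl_def by blast

lemma hom_endo_delta:
  assumes "hom_endo lmP lmQ F"
  shows "F (hom_delta lmP lmQ a \<Phi>) = hom_delta lmP lmQ a (F \<Phi>)"
proof -
  have "hom_delta lmP lmQ a \<Phi> = hom_lmul lmQ a \<Phi> - hom_bullet lmP \<Phi> a"
    unfolding hom_delta_def by (simp add: fun_diff_def)
  moreover have "hom_delta lmP lmQ a (F \<Phi>) = hom_lmul lmQ a (F \<Phi>) - hom_bullet lmP (F \<Phi>) a"
    unfolding hom_delta_def by (simp add: fun_diff_def)
  ultimately show ?thesis
    using assms additive.diff unfolding hom_endo_def by metis
qed

lemma sub_bimodule_preimage:
  assumes "sub_bimodule iota lmP lmQ (HomK iota lmP lmQ)" and F: "hom_endo lmP lmQ F"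
    and "sub_bimodule iota lmP lmQ G"
  shows "sub_bimodule iota lmP lmQ {\<Phi> \<in> HomK iota lmP lmQ. F \<Phi> \<in> G}"
  using assms(1,3) hom_endo_zero[OF F] hom_endo_add[OF F] hom_endo_minus[OF F] F
  unfolding sub_bimodule_def hom_endo_def by auto

lemma hom_endo_gen_sub_bimodule:
  assumes HomK: "sub_bimodule iota lmP lmQ (HomK iota lmP lmQ)" and F: "hom_endo lmP lmQ F"
    and S: "S \<subseteq> HomK iota lmP lmQ" and F_S: "\<And>\<Psi>. \<Psi> \<in> S \<Longrightarrow> F \<Psi> \<in> S"
    and "\<Phi> \<in> gen_sub_bimodule iota lmP lmQ S"
  shows "F \<Phi> \<in> gen_sub_bimodule iota lmP lmQ S"
proof -
  let ?G = "gen_sub_bimodule iota lmP lmQ S"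
  have "sub_bimodule iota lmP lmQ {\<Psi> \<in> HomK iota lmP lmQ. F \<Psi> \<in> ?G}"
    by (rule sub_bimodule_preimage[OF HomK F sub_bimodule_gen_sub_bimodule[OF HomK S]])
  moreover have "S \<subseteq> {\<Psi> \<in> HomK iota lmP lmQ. F \<Psi> \<in> ?G}"
    using S F_S gen_sub_bimodule_superset by blast
  ultimately have "?G \<subseteq> {\<Psi> \<in> HomK iota lmP lmQ. F \<Psi> \<in> ?G}"
    by (rule gen_sub_bimodule_least)
  then show ?thesis using assms(5) by blast
qed

lemma diff_ops_subset_HomK:
  assumes "K_ring iota" and "bimodule lmP rmP" and "bimodule lmQ rmQ"
  shows "diff_ops iota lmP lmQ r \<subseteq> HomK iota lmP lmQ"
  using sub_bimodule_diff_ops[OF assms] by (simp add: sub_bimodule_def)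

lemma hom_endo_diff_ops:
  assumes K: "K_ring iota" and P: "bimodule lmP rmP" and Q: "bimodule lmQ rmQ"
    and F: "hom_endo lmP lmQ F"
    and F_HomK: "\<And>\<Psi>. \<Psi> \<in> HomK iota lmP lmQ \<Longrightarrow> F \<Psi> \<in> HomK iota lmP lmQ"
    and "\<Phi> \<in> diff_ops iota lmP lmQ r"
  shows "F \<Phi> \<in> diff_ops iota lmP lmQ r"
  using assms(6)
proof (induction r arbitrary: \<Phi>)
  case 0
  let ?S = "{\<Psi> \<in> HomK iota lmP lmQ. \<forall>a. hom_delta lmP lmQ a \<Psi> = (\<lambda>_. 0)}"
  have "F \<Psi> \<in> ?S" if \<Psi>: "\<Psi> \<in> ?S" for \<Psi>
  proof -
    have "hom_delta lmP lmQ a (F \<Psi>) = (\<lambda>_. 0)" for a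
    proof -
      have "hom_delta lmP lmQ a (F \<Psi>) = F (hom_delta lmP lmQ a \<Psi>)"
        by (rule hom_endo_delta[OF F, symmetric])
      also have "\<dots> = F (\<lambda>_. 0)" using \<Psi> by simp
      also have "\<dots> = (\<lambda>_. 0)" by (rule hom_endo_zero[OF F])
      finally show ?thesis .
    qed
    then show ?thesis using \<Psi> F_HomK by blast
  qed
  then show ?case
    using 0 unfolding diff_ops.simps
    by (intro hom_endo_gen_sub_bimodule[OF HomK_sub_bimodule[OF K P Q] F]) blast+
next
  case (Suc r)
  let ?S = "diff_ops iota lmP lmQ r \<union>
    {\<Psi> \<in> HomK iota lmP lmQ. \<forall>a. hom_delta lmP lmQ a \<Psi> \<in> diff_ops iota lmP lmQ r}"
  have "F \<Psi> \<in> ?S" if \<Psi>: "\<Psi> \<in> ?S" for \<Psi>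
  proof (cases "\<Psi> \<in> diff_ops iota lmP lmQ r")
    case True
    then show ?thesis using Suc.IH by blast
  next
    case False
    have "hom_delta lmP lmQ a (F \<Psi>) \<in> diff_ops iota lmP lmQ r" for a
      unfolding hom_endo_delta[OF F, symmetric] using False \<Psi> Suc.IH by blast
    then show ?thesis using False \<Psi> F_HomK by blast
  qed
  moreover have "?S \<subseteq> HomK iota lmP lmQ"
    using diff_ops_subset_HomK[OF K P Q] by blast
  ultimately show ?case
    using Suc.prems unfolding diff_ops.simps
    by (intro hom_endo_gen_sub_bimodule[OF HomK_sub_bimodule[OF K P Q] F])
qed

lemma hom_endo_right_mult:
  assumes "bimodule lmQ rmQ"
  shows "hom_endo lmP lmQ (\<lambda>\<Phi> p. rmQ (\<Phi> p) a)"
  unfolding hom_endo_def hom_lmul_def hom_bullet_def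
  by (simp add: additive_def plus_fun_def additive.add[OF bimodule_additive_right[OF assms]]
      bimodule_left_right_commute[OF assms])

lemma HomK_right_mult:
  assumes "bimodule lmQ rmQ" and "\<Phi> \<in> HomK iota lmP lmQ"
  shows "(\<lambda>p. rmQ (\<Phi> p) a) \<in> HomK iota lmP lmQ"
  using assms(2)
  by (simp add: HomK_def additive.add[OF bimodule_additive_right[OF assms(1)]]
      bimodule_left_right_commute[OF assms(1)])

lemma hom_endo_right_bullet:
  assumes "bimodule lmP rmP"
  shows "hom_endo lmP lmQ (\<lambda>\<Phi> p. \<Phi> (rmP p a))"
  unfolding hom_endo_def hom_lmul_def hom_bullet_def
  by (simp add: additive_def plus_fun_def bimodule_left_right_commute[OF assms])

lemma HomK_right_bullet:
  assumes "bimodule lmP rmP" and "\<Phi> \<in> HomK iota lmP lmQ"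
  shows "(\<lambda>p. \<Phi> (rmP p a)) \<in> HomK iota lmP lmQ"
  using assms(2)
  by (simp add: HomK_def additive.add[OF bimodule_additive_right[OF assms(1)]]
      flip: bimodule_left_right_commute[OF assms(1)])

theorem proposition8:
  fixes iota :: "'k::comm_ring_1 \<Rightarrow> 'a::ring_1"
    and lmP :: "'a \<Rightarrow> 'p::ab_group_add \<Rightarrow> 'p" and rmP :: "'p \<Rightarrow> 'a \<Rightarrow> 'p"
    and lmQ :: "'a \<Rightarrow> 'q::ab_group_add \<Rightarrow> 'q" and rmQ :: "'q \<Rightarrow> 'a \<Rightarrow> 'q"
    and r :: nat
  assumes "K_ring iota"
    and "bimodule lmP rmP"
    and "bimodule lmQ rmQ"
    and "\<Phi> \<in> diff_ops iota lmP lmQ r"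
  shows "(\<lambda>p. lmQ a (\<Phi> p)) \<in> diff_ops iota lmP lmQ r \<and>
         (\<lambda>p. \<Phi> (lmP a p)) \<in> diff_ops iota lmP lmQ r \<and>
         (\<lambda>p. rmQ (\<Phi> p) a) \<in> diff_ops iota lmP lmQ r \<and>
         (\<lambda>p. \<Phi> (rmP p a)) \<in> diff_ops iota lmP lmQ r"
proof (intro conjI)
  note K = assms(1) and P = assms(2) and Q = assms(3) and \<Phi> = assms(4)
  show "(\<lambda>p. lmQ a (\<Phi> p)) \<in> diff_ops iota lmP lmQ r"
    and "(\<lambda>p. \<Phi> (lmP a p)) \<in> diff_ops iota lmP lmQ r"
    using sub_bimodule_diff_ops[OF K P Q, of r] \<Phi>
    unfolding sub_bimodule_def hom_lmul_def hom_bullet_def by blast+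
  show "(\<lambda>p. rmQ (\<Phi> p) a) \<in> diff_ops iota lmP lmQ r"
    using hom_endo_diff_ops[OF K P Q hom_endo_right_mult[OF Q] HomK_right_mult[OF Q] \<Phi>] .
  show "(\<lambda>p. \<Phi> (rmP p a)) \<in> diff_ops iota lmP lmQ r"
    using hom_endo_diff_ops[OF K P Q hom_endo_right_bullet[OF P] HomK_right_bullet[OF P] \<Phi>] .
qed

end
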